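(* For every $n\in\mathbb{N}$ there is a constant $c_n>0$ such that for all $t\in(0,1/2]$ and all $\lambda_1,\dots,\lambda_n>0$ with $\lambda_1\lambda_2\cdots\lambda_n=1$, $$\sqrt{\sum_{i=1}^n(\lambda_i-1)^2}\le c_nt^{-n}\left(\prod_{i=1}^n\big(t+(1-t)\lambda_i\big)-1\right)+c_nt^{-1/2}\sqrt{\prod_{i=1}^n\big(t+(1-t)\lambda_i\big)-1}.$$ *)

theory Defs
  imports Complex_Main
begin

end

theory Submission
  imports Defs
begin

text \<open>Write \<open>\<mu>\<^sub>i = t + (1 - t)\<lambda>\<^sub>i\<close> and \<open>D = \<Prod>\<^sub>i \<mu>\<^sub>i - 1\<close>. Since \<open>\<Sum>\<^sub>i ln \<lambda>\<^sub>i = 0\<close>, we have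
  \<open>ln (\<Prod>\<^sub>i \<mu>\<^sub>i) = \<Sum>\<^sub>i g(\<lambda>\<^sub>i)\<close> with the concavity gap \<open>g(x) = ln (t + (1 - t)x) - (1 - t) ln x \<ge> 0\<close>,
  and \<open>ln \<le> id - 1\<close> gives \<open>\<Sum>\<^sub>i g(\<lambda>\<^sub>i) \<le> D\<close>. A derivative computation shows
  \<open>g(x) \<ge> t/16 \<cdot> min ((x - 1)\<^sup>2) 1\<close>. If every \<open>\<lambda>\<^sub>i\<close> is within distance 1 of 1, this gives
  \<open>\<Sum>\<^sub>i (\<lambda>\<^sub>i - 1)\<^sup>2 \<le> 16 n D / t\<close>. Otherwise \<open>D \<ge> t/16\<close>, and bounding all other factors of the
  product below by \<open>t\<close> gives \<open>\<lambda>\<^sub>i \<le> 2 (1 + D) / t\<^sup>n\<^sup>-\<^sup>1 \<le> 34 D / t\<^sup>n\<close> for every \<open>i\<close>.\<close>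

lemma mix_pos: "0 < t \<Longrightarrow> t \<le> 1/2 \<Longrightarrow> 0 < x \<Longrightarrow> t + (1-t)*x > (0::real)"
  using mult_pos_pos[of "1-t" x] by linarith

definition log_mix_gap :: "real \<Rightarrow> real \<Rightarrow> real" where
  "log_mix_gap t x = ln (t + (1-t)*x) - (1-t) * ln x"

lemma log_mix_gap_one [simp]: "log_mix_gap t 1 = 0"
  by (simp add: log_mix_gap_def)

lemma log_mix_gap_deriv:
  assumes "0 < t" "t \<le> 1/2" "0 < x"
  shows "DERIV (log_mix_gap t) x :> t*(x-1) * ((1-t)/(x*(t+(1-t)*x)))"
proof -
  have p: "t + (1-t)*x > 0" using assms by (rule mix_pos)
  have "DERIV (\<lambda>x. ln (t + (1-t)*x) - (1-t) * ln x) x :> (1-t)/(t+(1-t)*x) - (1-t)*(1/x)"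
    by (rule derivative_eq_intros refl | use p assms in auto)+
  moreover have "(1-t)/(t+(1-t)*x) - (1-t)*(1/x) = t*(x-1) * ((1-t)/(x*(t+(1-t)*x)))"
    using p assms by (simp add: field_simps)
  ultimately show ?thesis unfolding log_mix_gap_def[abs_def] by simp
qed

lemma log_mix_gap_ge_below_one:
  assumes "0 < t" "t \<le> 1/2" "0 < x" "x \<le> 1"
  shows "t*(1-x)^2/4 \<le> log_mix_gap t x"
proof -
  let ?g = "\<lambda>s. log_mix_gap t s - t*(1-s)^2/4"
  have "?g 1 \<le> ?g x"
  proof (rule DERIV_nonpos_imp_nonincreasing[OF assms(4)])
    fix s assume s: "x \<le> s" "s \<le> 1"
    hence s0: "0 < s" using assms by simp
    have p: "t + (1-t)*s > 0" using assms s0 by (intro mix_pos) auto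
    have "(1-t)*s \<le> (1-t)*1" using assms s by (intro mult_left_mono) auto
    hence "s*(t+(1-t)*s) \<le> 1" using s p s0 by (intro mult_le_one) auto
    hence "1/2 \<le> (1-t)/(s*(t+(1-t)*s))"
      using assms p s0 by (simp add: le_divide_eq)
    hence "t*(s-1) * ((1-t)/(s*(t+(1-t)*s))) \<le> t*(s-1) * (1/2)"
      using assms s by (intro mult_left_mono_neg) (auto simp: mult_nonneg_nonpos)
    moreover have "DERIV ?g s :> t*(s-1) * ((1-t)/(s*(t+(1-t)*s))) - t*(s-1)/2"
      by (intro DERIV_diff log_mix_gap_deriv assms s0 derivative_eq_intros refl) auto
    ultimately show "\<exists>y. DERIV ?g s :> y \<and> y \<le> 0" by fastforce
  qed
  thus ?thesis by simp
qed

lemma log_mix_gap_ge_one_to_two: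
  assumes "0 < t" "t \<le> 1/2" "1 \<le> x" "x \<le> 2"
  shows "t*(x-1)^2/16 \<le> log_mix_gap t x"
proof -
  let ?g = "\<lambda>s. log_mix_gap t s - t*(s-1)^2/16"
  have "?g 1 \<le> ?g x"
  proof (rule DERIV_nonneg_imp_nondecreasing[OF assms(3)])
    fix s assume s: "1 \<le> s" "s \<le> x"
    hence s0: "0 < s" using assms by simp
    have p: "t + (1-t)*s > 0" using assms s0 by (intro mix_pos) auto
    have "t*1 \<le> t*s" using assms s by (intro mult_left_mono) auto
    hence "t + (1-t)*s \<le> s" by (simp add: algebra_simps)
    hence "s*(t+(1-t)*s) \<le> 2*2" using s p assms by (intro mult_mono) auto
    hence "1/8 \<le> (1-t)/(s*(t+(1-t)*s))"
      using assms p s0 by (simp add: le_divide_eq)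
    hence "t*(s-1) * (1/8) \<le> t*(s-1) * ((1-t)/(s*(t+(1-t)*s)))"
      using assms s by (intro mult_left_mono) auto
    moreover have "DERIV ?g s :> t*(s-1) * ((1-t)/(s*(t+(1-t)*s))) - t*(s-1)/8"
      by (intro DERIV_diff log_mix_gap_deriv assms s0 derivative_eq_intros refl) auto
    ultimately show "\<exists>y. DERIV ?g s :> y \<and> y \<ge> 0" by fastforce
  qed
  thus ?thesis by simp
qed

lemma log_mix_gap_mono_above_one:
  assumes "0 < t" "t \<le> 1/2" "1 \<le> a" "a \<le> x"
  shows "log_mix_gap t a \<le> log_mix_gap t x"
proof (rule DERIV_nonneg_imp_nondecreasing[OF assms(4)])
  fix s assume s: "a \<le> s" "s \<le> x"
  hence s0: "0 < s" using assms by simp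
  have "t + (1-t)*s > 0" using assms s0 by (intro mix_pos) auto
  hence "t*(s-1) * ((1-t)/(s*(t+(1-t)*s))) \<ge> 0" using assms s s0 by simp
  thus "\<exists>y. DERIV (log_mix_gap t) s :> y \<and> y \<ge> 0"
    using log_mix_gap_deriv[OF assms(1,2) s0] by blast
qed

lemma log_mix_gap_ge:
  assumes "0 < t" "t \<le> 1/2" "0 < x"
  shows "t/16 * min ((x-1)^2) 1 \<le> log_mix_gap t x"
proof (cases "x \<le> 1")
  case True
  have "(1-x)^2 \<le> 1" using True assms by (intro power_le_one) auto
  hence "t/16 * min ((x-1)^2) 1 = t*(1-x)^2/16" by (simp add: power2_commute)
  moreover have "0 \<le> t*(1-x)^2" using assms by simp
  ultimately show ?thesis using log_mix_gap_ge_below_one[OF assms True] by linarith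
next
  case False
  show ?thesis
  proof (cases "x \<le> 2")
    case True
    have "(x-1)^2 \<le> 1" using True False by (intro power_le_one) auto
    thus ?thesis using log_mix_gap_ge_one_to_two[OF assms(1,2) _ True] False by simp
  next
    case beyond: False
    have "t/16 \<le> log_mix_gap t 2" using log_mix_gap_ge_one_to_two[of t 2] assms by simp
    also have "\<dots> \<le> log_mix_gap t x" using log_mix_gap_mono_above_one[of t 2 x] assms beyond by simp
    finally have "t/16 \<le> log_mix_gap t x" .
    moreover have "1 \<le> (x-1)^2" using beyond by (intro one_le_power) auto
    ultimately show ?thesis by simp
  qed
qed

lemma log_mix_gap_nonneg:
  assumes "0 < t" "t \<le> 1/2" "0 < x"
  shows "0 \<le> log_mix_gap t x"
proof -
  have "0 \<le> t/16 * min ((x-1)^2) 1" using assms by simp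
  thus ?thesis using log_mix_gap_ge[OF assms] by linarith
qed

lemma sum_log_mix_gap_le_prod_mix:
  fixes l :: "'a \<Rightarrow> real"
  assumes "finite S" "0 < t" "t \<le> 1/2" "\<And>i. i \<in> S \<Longrightarrow> 0 < l i" "(\<Prod>i\<in>S. l i) = 1"
  shows "(\<Sum>i\<in>S. log_mix_gap t (l i)) \<le> (\<Prod>i\<in>S. t + (1-t) * l i) - 1"
proof -
  have mix: "i \<in> S \<Longrightarrow> 0 < t + (1-t) * l i" for i using assms by (intro mix_pos) auto
  have "ln (\<Prod>i\<in>S. t + (1-t) * l i) = (\<Sum>i\<in>S. ln (t + (1-t) * l i))"
    using mix by (intro ln_prod assms(1)) force
  also have "\<dots> = (\<Sum>i\<in>S. log_mix_gap t (l i) + (1-t) * ln (l i))"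
    by (simp add: log_mix_gap_def)
  also have "\<dots> = (\<Sum>i\<in>S. log_mix_gap t (l i)) + (1-t) * (\<Sum>i\<in>S. ln (l i))"
    by (simp add: sum.distrib sum_distrib_left)
  also have "(\<Sum>i\<in>S. ln (l i)) = ln (\<Prod>i\<in>S. l i)"
    by (intro ln_prod[symmetric] assms(1)) (metis assms(4) less_irrefl)
  finally show ?thesis
    using ln_le_minus_one[of "\<Prod>i\<in>S. t + (1-t) * l i"] mix assms by (simp add: prod_pos)
qed

lemma sqrt_sum_le_sqrt_card_mult:
  fixes f :: "'a \<Rightarrow> real"
  assumes "\<And>i. i \<in> S \<Longrightarrow> f i \<le> b"
  shows "sqrt (sum f S) \<le> sqrt (real (card S)) * sqrt b"
  using real_sqrt_le_mono[OF sum_bounded_above[of S f b, OF assms]] by (simp add: real_sqrt_mult)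

lemma entry_le_prod_mix:
  fixes l :: "'a \<Rightarrow> real"
  assumes "finite S" "i \<in> S" "0 < t" "t \<le> 1/2" "\<And>k. k \<in> S \<Longrightarrow> 0 < l k"
  shows "l i * t ^ (card S - 1) \<le> 2 * (\<Prod>k\<in>S. t + (1-t) * l k)"
proof -
  have "t ^ (card S - 1) = (\<Prod>k\<in>S-{i}. t)" using assms by (simp add: card_Diff_singleton)
  also have "\<dots> \<le> (\<Prod>k\<in>S-{i}. t + (1-t) * l k)"
    using assms mult_pos_pos[of "1-t"] by (intro prod_mono) force
  finally have others: "t ^ (card S - 1) \<le> (\<Prod>k\<in>S-{i}. t + (1-t) * l k)" .
  have "0 < l i" using assms(2,5) by blast
  hence "1/2 * l i \<le> (1-t) * l i" using assms(4) by (intro mult_right_mono) auto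
  hence "l i / 2 \<le> t + (1-t) * l i" using assms(3) by linarith
  hence "l i / 2 * t ^ (card S - 1) \<le> (t + (1-t) * l i) * (\<Prod>k\<in>S-{i}. t + (1-t) * l k)"
    using others \<open>0 < l i\<close> assms(3) by (intro mult_mono) auto
  also have "\<dots> = (\<Prod>k\<in>S. t + (1-t) * l k)"
    using assms by (simp add: prod.remove)
  finally show ?thesis by simp
qed

lemma log_mix_gap_bound_le_prod_mix:
  fixes l :: "'a \<Rightarrow> real"
  assumes "finite S" "0 < t" "t \<le> 1/2" "\<And>i. i \<in> S \<Longrightarrow> 0 < l i" "(\<Prod>i\<in>S. l i) = 1"
    and "j \<in> S"
  shows "t/16 * min ((l j - 1)^2) 1 \<le> (\<Prod>i\<in>S. t + (1-t) * l i) - 1"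
proof -
  have "log_mix_gap t (l j) \<le> (\<Sum>i\<in>S. log_mix_gap t (l i))"
    using assms log_mix_gap_nonneg by (intro member_le_sum) auto
  thus ?thesis using log_mix_gap_ge[OF assms(2,3) assms(4)[OF \<open>j \<in> S\<close>]]
      sum_log_mix_gap_le_prod_mix[OF assms(1-5)] by linarith
qed

lemma prod_mix_ge_one:
  fixes l :: "'a \<Rightarrow> real"
  assumes "finite S" "0 < t" "t \<le> 1/2" "\<And>i. i \<in> S \<Longrightarrow> 0 < l i" "(\<Prod>i\<in>S. l i) = 1"
  shows "1 \<le> (\<Prod>i\<in>S. t + (1-t) * l i)"
proof -
  have "0 \<le> (\<Sum>i\<in>S. log_mix_gap t (l i))"
    using assms log_mix_gap_nonneg by (intro sum_nonneg) auto
  thus ?thesis using sum_log_mix_gap_le_prod_mix[OF assms] by linarith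
qed

lemma sqrt_sum_sq_le_if_near_one:
  fixes l :: "'a \<Rightarrow> real"
  assumes "finite S" "0 < t" "t \<le> 1/2" "\<And>i. i \<in> S \<Longrightarrow> 0 < l i" "(\<Prod>i\<in>S. l i) = 1"
    and "\<And>i. i \<in> S \<Longrightarrow> (l i - 1)^2 \<le> 1"
  shows "sqrt (\<Sum>i\<in>S. (l i - 1)^2)
    \<le> 4 * sqrt (real (card S)) * t powr (-1/2) * sqrt ((\<Prod>i\<in>S. t + (1-t) * l i) - 1)"
proof -
  define D where "D = (\<Prod>i\<in>S. t + (1-t) * l i) - 1"
  have "(l i - 1)^2 \<le> 16 * D / t" if "i \<in> S" for i
  proof -
    have "t/16 * (l i - 1)^2 \<le> D"
      using log_mix_gap_bound_le_prod_mix[OF assms(1-5) that] assms(6)[OF that] by (simp add: D_def)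
    thus ?thesis using assms(2) by (simp add: field_simps)
  qed
  hence "sqrt (\<Sum>i\<in>S. (l i - 1)^2) \<le> sqrt (real (card S)) * sqrt (16 * D / t)"
    by (rule sqrt_sum_le_sqrt_card_mult)
  also have "sqrt (16 * D / t) = 4 * t powr (-1/2) * sqrt D"
    using assms(2) by (simp add: real_sqrt_mult real_sqrt_divide powr_minus_divide powr_half_sqrt)
  finally show ?thesis by (simp add: D_def mult.assoc)
qed

lemma sqrt_sum_sq_le_if_far_from_one:
  fixes l :: "'a \<Rightarrow> real"
  assumes "finite S" "0 < t" "t \<le> 1/2" "\<And>i. i \<in> S \<Longrightarrow> 0 < l i" "(\<Prod>i\<in>S. l i) = 1"
    and "t/16 \<le> (\<Prod>i\<in>S. t + (1-t) * l i) - 1"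
  shows "sqrt (\<Sum>i\<in>S. (l i - 1)^2)
    \<le> sqrt (real (card S)) * (34 * ((\<Prod>i\<in>S. t + (1-t) * l i) - 1) / t ^ card S)"
proof -
  define D where "D = (\<Prod>i\<in>S. t + (1-t) * l i) - 1"
  define B where "B = 34 * D / t ^ card S"
  have D_ge: "t/16 \<le> D" using assms(6) by (simp add: D_def)
  hence "D * t \<le> D * (1/2)" using assms(2,3) by (intro mult_left_mono) auto
  moreover have "2 * (1 + D) * t = 2 * t + 2 * (D * t)" by (simp add: algebra_simps)
  ultimately have "2 * (1 + D) * t \<le> 34 * D" using D_ge assms(2) by linarith
  have "(l i - 1)^2 \<le> B^2" if "i \<in> S" for i
  proof -
    have "card S \<ge> 1" using assms(1) that by (simp add: Suc_le_eq card_gt_0_iff) blast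
    hence tn: "t ^ card S = t ^ (card S - 1) * t" by (simp add: power_eq_if)
    have tn_le: "t ^ card S \<le> t" using \<open>card S \<ge> 1\<close> assms(2,3) by (simp add: power_le_one tn)
    have "l i * t ^ card S \<le> 2 * (1 + D) * t"
      using entry_le_prod_mix[OF assms(1) that assms(2-4)] assms(2)
      by (simp add: tn D_def mult.assoc[symmetric])
    also have "\<dots> \<le> 34 * D" by fact
    finally have "l i \<le> B" using assms(2) by (simp add: B_def pos_le_divide_eq)
    moreover have "1 \<le> B"
      using tn_le assms(2,6) by (simp add: B_def D_def pos_le_divide_eq)
    ultimately have "\<bar>l i - 1\<bar> \<le> B" using assms(4)[OF that] by linarith
    thus ?thesis by (metis abs_ge_zero power2_abs power_mono)
  qed
  hence "sqrt (\<Sum>i\<in>S. (l i - 1)^2) \<le> sqrt (real (card S)) * sqrt (B^2)"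
    by (rule sqrt_sum_le_sqrt_card_mult)
  also have "sqrt (B^2) = B"
    using assms(2,6) by (simp add: B_def D_def)
  finally show ?thesis by (simp add: B_def D_def)
qed

lemma sqrt_sum_sq_le_prod_mix:
  fixes l :: "'a \<Rightarrow> real"
  assumes "finite S" "0 < t" "t \<le> 1/2" "\<And>i. i \<in> S \<Longrightarrow> 0 < l i" "(\<Prod>i\<in>S. l i) = 1"
  defines "c \<equiv> 34 * (real (card S) + 1)" and "D \<equiv> (\<Prod>i\<in>S. t + (1-t) * l i) - 1"
  shows "sqrt (\<Sum>i\<in>S. (l i - 1)^2) \<le> c * (1 / t ^ card S) * D + c * t powr (-1/2) * sqrt D"
proof -
  have "0 \<le> D" using prod_mix_ge_one[OF assms(1-5)] by (simp add: D_def)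
  have "sqrt (real (card S)) \<le> real (card S) + 1"
    by (intro real_le_lsqrt) (simp_all add: power2_eq_square algebra_simps)
  hence c_ge: "4 * sqrt (real (card S)) \<le> c" "sqrt (real (card S)) * 34 \<le> c"
    by (auto simp: c_def)
  have near: "0 \<le> c * (1 / t ^ card S) * D" and far: "0 \<le> c * t powr (-1/2) * sqrt D"
    using \<open>0 \<le> D\<close> assms(2) by (simp_all add: c_def)
  show ?thesis
  proof (cases "\<forall>i\<in>S. (l i - 1)^2 \<le> 1")
    case True
    have "sqrt (\<Sum>i\<in>S. (l i - 1)^2) \<le> 4 * sqrt (real (card S)) * (t powr (-1/2) * sqrt D)"
      using sqrt_sum_sq_le_if_near_one[OF assms(1-5)] True by (simp add: D_def mult.assoc)
    also have "\<dots> \<le> c * (t powr (-1/2) * sqrt D)"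
      using c_ge(1) \<open>0 \<le> D\<close> by (intro mult_right_mono) auto
    finally show ?thesis using near by (simp only: mult.assoc)
  next
    case False
    then obtain j where "j \<in> S" "1 < (l j - 1)^2" by auto
    hence "t/16 \<le> D"
      using log_mix_gap_bound_le_prod_mix[OF assms(1-5)] by (force simp: D_def)
    hence "sqrt (\<Sum>i\<in>S. (l i - 1)^2) \<le> sqrt (real (card S)) * 34 * (1 / t ^ card S * D)"
      using sqrt_sum_sq_le_if_far_from_one[OF assms(1-5)] by (simp add: D_def mult.assoc)
    also have "\<dots> \<le> c * (1 / t ^ card S * D)"
      using c_ge(2) \<open>0 \<le> D\<close> assms(2) by (intro mult_right_mono) auto
    finally show ?thesis using far by (simp only: mult.assoc)
  qed
qed

theorem mainTheorem13:
  fixes n :: nat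
  shows "\<exists>c::real. c > 0 \<and>
    (\<forall>(t::real) (l::nat \<Rightarrow> real).
       0 < t \<and> t \<le> 1/2 \<and> (\<forall>i\<in>{1..n}. l i > 0) \<and> (\<Prod>i=1..n. l i) = 1 \<longrightarrow>
       sqrt (\<Sum>i=1..n. (l i - 1)^2)
         \<le> c * (1 / t ^ n) * ((\<Prod>i=1..n. t + (1 - t) * l i) - 1)
           + c * t powr (-1/2) * sqrt ((\<Prod>i=1..n. t + (1 - t) * l i) - 1))"
proof (intro exI[of _ "34 * (real n + 1)"] conjI allI impI)
  fix t :: real and l :: "nat \<Rightarrow> real"
  assume "0 < t \<and> t \<le> 1/2 \<and> (\<forall>i\<in>{1..n}. l i > 0) \<and> (\<Prod>i=1..n. l i) = 1"
  then show "sqrt (\<Sum>i=1..n. (l i - 1)^2)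
         \<le> 34 * (real n + 1) * (1 / t ^ n) * ((\<Prod>i=1..n. t + (1 - t) * l i) - 1)
           + 34 * (real n + 1) * t powr (-1/2) * sqrt ((\<Prod>i=1..n. t + (1 - t) * l i) - 1)"
    using sqrt_sum_sq_le_prod_mix[of "{1..n}" t l] by simp
qed simp

end
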